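(* Let $L>0$, $K>0$, $L_p a>0$, $t_0>0$, $0<\nu_{\min}<\nu_{\max}$, and let $\sigma_1,\sigma_2,p_0,w_0,w_D,q_l$ be real constants. Put $\beta=\frac{L_paL^2}{K}$ and $\nu(x)=\nu_{\max}-(\nu_{\max}-\nu_{\min})x$ for $x\in[0,1]$. Let $p,u,w$ be twice continuously differentiable functions on $[0,1]$ satisfying $$\frac{1}{t_0}\frac{d}{dx}\Big(\nu \frac{dp}{dx}\Big) - \sigma_1\frac{d}{dx}\Big(\nu \frac{du}{dx}\Big) - \sigma_2\frac{d}{dx}\Big(\nu\frac{dw}{dx}\Big) + q_U - q_l = 0 \quad\text{on } [0,1],$$ where $$q_U(x) = \beta\Big(\frac{1}{t_0}(p_0-p(x)) + \sigma_1 u(x) + \sigma_2 (w(x)-w_0)\Big),$$ together with $p(0)=1$, $u(0)=1$, $w(0)=w_D$, $p'(1)=u'(1)=w'(1)=0$. Define $$j_U(x) = L\nu(x)\Big(-\frac{1}{t_0}p'(x) + \sigma_1 u'(x) + \sigma_2 w'(x)\Big).$$ Put $\nu_*=\frac{\nu_{\max}}{\nu_{\max}-\nu_{\min}}$, $\delta_*=\frac{L_paL^2}{K(\nu_{\max}-\nu_{\min})}$, $z(x)=2\sqrt{\delta_*(\nu_*-x)}$, $z_0=z(0)$, $z_1=z(1)$, $$q_0 = \beta\Big(\frac{1}{t_0}(p_0-1)+\sigma_1+\sigma_2 (w_D - w_0)\Big),\quad D = I_0(z_0)K_1(z_1)+K_0(z_0)I_1(z_1),$$ $$C_1=\frac{(q_0-q_l)K_1(z_1)}{D},\qquad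 C_2=\frac{(q_0-q_l)I_1(z_1)}{D},$$ where $I_0,I_1$ and $K_0,K_1$ are the modified Bessel functions of the first and second (Macdonald) kind of orders $0$ and $1$. Then for all $x\in[0,1]$ $$q_U(x)=C_1I_0(z(x))+C_2K_0(z(x))+q_l,\qquad j_U(x)=-L\sqrt{\frac{\nu_*-x}{\delta_*}}\,\Big(C_1I_1(z(x))-C_2K_1(z(x))\Big).$$
   Context: This is the steady-state fluid balance equation of a non-dimensionalised model of fluid, glucose and albumin transport in peritoneal dialysis, under the assumptions that the reflection coefficients in tissue and capillary wall coincide and that the fractional void volume $\nu$ decreases linearly in the non-dimensional depth $x\in[0,1]$ from $\nu_{\max}$ to $\nu_{\min}$. Here $p$ is non-dimensional hydrostatic pressure, $u,w$ non-dimensional glucose and albumin concentrations, $q_U$ the density of fluid flux from blood to tissue, $j_U$ the fluid flux across the tissue, $q_l$ the lymphatic flux density, $w_D$ and $w_0$ the non-dimensional albumin concentrations in dialysate and blood. Note $\nu_*>1$ and $\delta_*>0$, so $z(x)>0$ on $[0,1]$. *)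

theory Defs
  imports "HOL-Analysis.Analysis"
begin

definition besselI :: "nat \<Rightarrow> real \<Rightarrow> real" where
  "besselI n x = (\<Sum>k. (x / 2) ^ (2 * k + n) / (fact k * fact (k + n)))"

text \<open>Modified Bessel function of the second kind (Macdonald function) of integer order n,
  via the standard integral representation K_n(x) = int_0^infty exp(-x cosh t) cosh(n t) dt, x > 0.\<close>
definition besselK :: "nat \<Rightarrow> real \<Rightarrow> real" where
  "besselK n x = integral {0..} (\<lambda>t. exp (- x * cosh t) * cosh (real n * t))"

end

theory Submission
  imports Defs "HOL-Real_Asymp.Real_Asymp"
begin

text \<open>
  The equation is linear in the effective pressure \<open>\<phi> = - p / t0 + \<sigma>1 u + \<sigma>2 w\<close>: with
  \<open>q = qU - ql\<close> and \<open>g = \<nu> \<phi>'\<close> it becomes the first-order system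
  \<open>q' = \<delta>* g / (\<nu>* - x)\<close>, \<open>g' = q\<close>, with \<open>q(0) = q0 - ql\<close> and \<open>g(1) = 0\<close>.
  In the variable \<open>z = 2 \<surd>(\<delta>* (\<nu>* - x))\<close> this is the modified Bessel system, solved by
  \<open>C1 I0(z) + C2 K0(z)\<close> and the corresponding flux, thanks to \<open>I0' = I1\<close>, \<open>(z I1)' = z I0\<close>,
  \<open>K0' = - K1\<close>, \<open>(z K1)' = - z K0\<close>; the constants are chosen to fit both boundary values.
  Uniqueness follows from an energy argument: for the difference \<open>(E, H)\<close> of two solutions,
  \<open>E H\<close> has the nonnegative derivative \<open>\<delta>* H\<^sup>2 / (\<nu>* - x) + E\<^sup>2\<close> and vanishes at both ends,
  so this derivative vanishes identically.
  The identities for \<open>I\<close> come from the power series; those for \<open>K\<close> from the integral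
  representation, by differentiating under the integral sign and integrating by parts.
\<close>

lemma bessel_term_bound:
  fixes x R :: real
  assumes "\<bar>x\<bar> \<le> R" "2 \<le> R"
  shows "\<bar>(x/2)^(2*k+m) / (fact k * fact (k+j))\<bar> \<le> R^m * (R^2)^k / fact k"
proof -
  have "\<bar>(x/2)^(2*k+m) / (fact k * fact (k+j))\<bar> = \<bar>x/2\<bar>^(2*k+m) / (fact k * fact (k+j))"
    by (simp add: power_abs)
  also have "\<dots> \<le> \<bar>x/2\<bar>^(2*k+m) / fact k"
    by (intro divide_left_mono) (auto intro: mult_pos_pos)
  also have "\<dots> \<le> R^(2*k+m) / fact k"
    using assms by (intro divide_right_mono power_mono) auto
  also have "R^(2*k+m) = R^m * (R^2)^k"
    by (simp add: power_add power_mult)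
  finally show ?thesis .
qed

lemma bessel_term_deriv_bound:
  fixes x R :: real
  assumes "\<bar>x\<bar> \<le> R" "2 \<le> R"
  shows "\<bar>real (2*k+m)/2 * (x/2)^(2*k+m-1) / (fact k * fact (k+j))\<bar> \<le> R^m * (R^2)^k / fact k"
proof -
  define n where "n = 2*k+m"
  have "\<bar>real n/2 * (x/2)^(n-1) / (fact k * fact (k+j))\<bar> = real n/2 * \<bar>x/2\<bar>^(n-1) / (fact k * fact (k+j))"
    by (simp add: power_abs abs_mult)
  also have "\<dots> \<le> real n/2 * \<bar>x/2\<bar>^(n-1) / fact k"
    by (intro divide_left_mono) (auto intro: mult_pos_pos)
  also have "\<dots> \<le> real n/2 * (R/2)^(n-1) / fact k"
    using assms by (intro divide_right_mono mult_left_mono power_mono) auto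
  also have "\<dots> \<le> 2^n * (R/2)^n / fact k"
  proof (intro divide_right_mono mult_mono)
    have "real n < 2^n"
      by (metis less_exp of_nat_less_iff of_nat_numeral of_nat_power)
    then show "real n / 2 \<le> 2^n" using zero_le_power[of "2::real" n] by linarith
    show "(R/2)^(n-1) \<le> (R/2)^n" using assms by (intro power_increasing) auto
  qed (use assms in auto)
  also have "2^n * (R/2)^n = R^m * (R^2)^k"
    by (simp add: n_def power_divide power_add power_mult)
  finally show ?thesis by (simp add: n_def)
qed

lemma summable_power_fact_majorant: "summable (\<lambda>k. R^m * (R^2)^k / fact k :: real)"
  using summable_mult[OF summable_exp[of "R^2"], of "R^m"] by (simp add: field_simps)

lemma bessel_power_series:
  fixes x :: real
  shows "summable (\<lambda>k. (x/2)^(2*k+m) / (fact k * fact (k+j)))"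
    and "((\<lambda>x. \<Sum>k. (x/2)^(2*k+m) / (fact k * fact (k+j))) has_real_derivative
       (\<Sum>k. real (2*k+m)/2 * (x/2)^(2*k+m-1) / (fact k * fact (k+j)))) (at x)"
proof -
  define R where "R = \<bar>x\<bar> + 2"
  let ?S = "{-R<..<R}"
  have d: "((\<lambda>x. (x/2)^(2*k+m) / (fact k * fact (k+j))) has_real_derivative
       real (2*k+m)/2 * (y/2)^(2*k+m-1) / (fact k * fact (k+j))) (at y within ?S)" for k y
  proof -
    have "((\<lambda>x. x/2) has_real_derivative 1/2) (at y within ?S)"
      by (auto intro!: derivative_eq_intros)
    from DERIV_cdivide[OF DERIV_power[OF this, of "2*k+m"], of "fact k * fact (k+j)"]
    show ?thesis by (simp add: field_simps)
  qed
  have u: "uniformly_convergent_on ?S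
      (\<lambda>n y. \<Sum>i<n. real (2*i+m)/2 * (y/2)^(2*i+m-1) / (fact i * fact (i+j)))"
  proof (rule Weierstrass_m_test'[OF _ summable_power_fact_majorant[of R m]])
    fix n y assume "y \<in> ?S"
    then have "\<bar>y\<bar> \<le> R" by auto
    from bessel_term_deriv_bound[OF this, of n m j]
    show "norm (real (2*n+m)/2 * (y/2)^(2*n+m-1) / (fact n * fact (n+j))) \<le> R^m * (R^2)^n / fact n"
      by (simp add: R_def)
  qed
  have s0: "summable (\<lambda>k. (0/2)^(2*k+m) / (fact k * fact (k+j)::real))"
    by (rule summable_comparison_test'[OF summable_power_fact_majorant[of 2 m], of 0])
       (use bessel_term_bound[of 0 2] in \<open>auto simp: real_norm_def\<close>)
  have "x \<in> interior ?S" "0 \<in> ?S" by (auto simp: R_def)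
  note series = has_field_derivative_series'[OF convex_real_interval(8) d u \<open>0 \<in> ?S\<close> s0
      \<open>x \<in> interior ?S\<close>]
  show "summable (\<lambda>k. (x/2)^(2*k+m) / (fact k * fact (k+j)))"
    by (rule series(1))
  show "((\<lambda>x. \<Sum>k. (x/2)^(2*k+m) / (fact k * fact (k+j))) has_real_derivative
       (\<Sum>k. real (2*k+m)/2 * (x/2)^(2*k+m-1) / (fact k * fact (k+j)))) (at x)"
    by (rule series(2))
qed

lemma summable_besselI: "summable (\<lambda>k. (x/2)^(2*k+n) / (fact k * fact (k+n)::real))"
  by (rule bessel_power_series(1))

lemma besselI_pos: "0 < x \<Longrightarrow> 0 < besselI n x"
  unfolding besselI_def by (rule suminf_pos[OF summable_besselI]) auto

lemma DERIV_besselI0: "(besselI 0 has_real_derivative besselI 1 x) (at x)"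
proof -
  define g where "g k = real (2*k+0)/2 * (x/2)^(2*k+0-1) / (fact k * fact (k+0))" for k
  have "(\<lambda>k. g (Suc k)) = (\<lambda>k. (x/2)^(2*k+1) / (fact k * fact (k+1)))"
  proof (rule ext)
    fix k
    have exponent: "2*Suc k+0-1 = 2*k+1" by simp
    have coefficient: "real (2*Suc k + 0)/2 = real (Suc k)" by simp
    have fact_step: "fact (Suc k) = real (Suc k) * (fact k::real)" by simp
    have index: "Suc k + 0 = k + 1" by simp
    show "g (Suc k) = (x/2)^(2*k+1) / (fact k * fact (k+1))"
      unfolding g_def exponent coefficient index by (simp only: fact_step[symmetric] Suc_eq_plus1[symmetric]) (simp add: fact_Suc)
  qed
  then have "(\<lambda>k. g (Suc k)) sums besselI 1 x"
    using summable_besselI[of x 1] by (simp add: besselI_def summable_sums)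
  then have "g sums (besselI 1 x + g 0)" by (simp only: sums_Suc_iff)
  moreover have "g 0 = 0" by (simp add: g_def)
  ultimately have "g sums besselI 1 x" by simp
  then have series_eq: "(\<Sum>k. g k) = besselI 1 x" by (rule sums_unique[symmetric])
  show ?thesis
    using bessel_power_series(2)[of 0 0 x] unfolding besselI_def[abs_def] series_eq[unfolded g_def] .
qed

lemma DERIV_x_besselI1: "((\<lambda>x. x * besselI 1 x) has_real_derivative x * besselI 0 x) (at x)"
proof -
  have eq: "(\<lambda>x. x * besselI 1 x) = (\<lambda>x. 2 * (\<Sum>k. (x/2)^(2*k+2) / (fact k * fact (k+1))))"
  proof (rule ext)
    fix y :: real
    have "y * besselI 1 y = (\<Sum>k. y * ((y/2)^(2*k+1) / (fact k * fact (k+1))))"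
      unfolding besselI_def by (rule suminf_mult[symmetric, OF summable_besselI])
    also have "\<dots> = (\<Sum>k. 2 * ((y/2)^(2*k+2) / (fact k * fact (k+1))))"
    proof (rule arg_cong[where f=suminf], rule ext)
      fix k
      have "y * (y/2)^(2*k+1) = 2 * ((y/2) * (y/2)^(2*k+1))" by simp
      also have "(y/2) * (y/2)^(2*k+1) = (y/2)^(2*k+2)" by simp
      finally show "y * ((y/2)^(2*k+1) / (fact k * fact (k+1))) = 2 * ((y/2)^(2*k+2) / (fact k * fact (k+1)))"
        by simp
    qed
    also have "\<dots> = 2 * (\<Sum>k. (y/2)^(2*k+2) / (fact k * fact (k+1)))"
      by (rule suminf_mult[OF bessel_power_series(1)])
    finally show "y * besselI 1 y = 2 * (\<Sum>k. (y/2)^(2*k+2) / (fact k * fact (k+1)))" .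
  qed
  have "2 * (\<Sum>k. real (2*k+2)/2 * (x/2)^(2*k+2-1) / (fact k * fact (k+1)))
        = (\<Sum>k. 2 * (real (2*k+2)/2 * (x/2)^(2*k+2-1) / (fact k * fact (k+1))))"
  proof (rule suminf_mult[symmetric],
      rule summable_comparison_test'[OF summable_power_fact_majorant[of "\<bar>x\<bar>+2" 2], of 0])
    fix n :: nat
    show "norm (real (2*n+2)/2 * (x/2)^(2*n+2-1) / (fact n * fact (n+1)))
        \<le> (\<bar>x\<bar>+2)^2 * ((\<bar>x\<bar>+2)^2)^n / fact n"
      using bessel_term_deriv_bound[of x "\<bar>x\<bar>+2" n 2 1] by simp
  qed
  also have "\<dots> = (\<Sum>k. x * ((x/2)^(2*k+0) / (fact k * fact (k+0))))"
  proof (rule arg_cong[where f=suminf], rule ext)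
    fix k
    have exponent: "2*k+2-1 = Suc (2*k+0)" by simp
    have coefficient: "real (2*k+2)/2 = real (Suc k)" by simp
    have fact_step: "fact (k+1) = real (Suc k) * (fact k::real)" by simp
    have power_step: "(x/2)^Suc (2*k+0) = (x/2) * (x/2)^(2*k+0)" by simp
    show "2 * (real (2*k+2)/2 * (x/2)^(2*k+2-1) / (fact k * fact (k+1))) = x * ((x/2)^(2*k+0) / (fact k * fact (k+0)))"
      unfolding exponent coefficient fact_step power_step by simp
  qed
  also have "\<dots> = x * besselI 0 x"
    unfolding besselI_def by (rule suminf_mult[OF summable_besselI])
  finally have series_eq: "2 * (\<Sum>k. real (2*k+2)/2 * (x/2)^(2*k+2-1) / (fact k * fact (k+1))) = x * besselI 0 x" .
  show ?thesis unfolding eq series_eq[symmetric]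
    by (intro DERIV_cmult bessel_power_series(2))
qed

lemma integral_truncation:
  fixes g :: "real \<Rightarrow> real"
  assumes "continuous_on {0..} g"
  shows "integral {0..} (\<lambda>t. if t \<in> {0..real N} then g t else 0) = integral {0..real N} g"
    and "(\<lambda>t. if t \<in> {0..real N} then g t else 0) integrable_on {0..}"
proof -
  have "g integrable_on {0..real N}"
    by (rule integrable_continuous_interval, rule continuous_on_subset[OF assms]) auto
  then show "(\<lambda>t. if t \<in> {0..real N} then g t else 0) integrable_on {0..}"
    using has_integral_restrict[of "{0..real N}" "{0..}" g] unfolding integrable_on_def by auto
  show "integral {0..} (\<lambda>t. if t \<in> {0..real N} then g t else 0) = integral {0..real N} g"
    by (subst integral_restrict_Int) (simp add: Int_absorb2)
qed

lemma dominated_integral_truncation: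
  fixes g h :: "real \<Rightarrow> real"
  assumes g: "continuous_on {0..} g" and h: "h integrable_on {0..}"
    and dom: "\<And>t. 0 \<le> t \<Longrightarrow> \<bar>g t\<bar> \<le> h t"
  shows "g integrable_on {0..}" and "(\<lambda>N. integral {0..real N} g) \<longlonglongrightarrow> integral {0..} g"
proof -
  let ?f = "\<lambda>N t. if t \<in> {0..real N} then g t else 0"
  have pointwise: "(\<lambda>N. ?f N t) \<longlonglongrightarrow> g t" if "t \<in> {0..}" for t
  proof (rule tendsto_eventually, rule eventually_mono[OF eventually_ge_at_top[of "nat \<lceil>t\<rceil>"]])
    fix N assume "nat \<lceil>t\<rceil> \<le> N"
    then have "t \<le> real N" using real_nat_ceiling_ge[of t] by linarith
    then show "?f N t = g t" using that by auto
  qed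
  have bounded: "norm (?f N t) \<le> h t" if "t \<in> {0..}" for N t
    using dom[of t] that by auto
  note lim = dominated_convergence[of ?f "{0..}" h g, OF integral_truncation(2)[OF g] h bounded pointwise]
  show "g integrable_on {0..}" by (rule lim(1))
  show "(\<lambda>N. integral {0..real N} g) \<longlonglongrightarrow> integral {0..} g"
    using lim(2) unfolding integral_truncation(1)[OF g] .
qed

lemma integral_truncation_tail_bound:
  fixes g h :: "real \<Rightarrow> real"
  assumes g: "continuous_on {0..} g" and h: "h integrable_on {0..}" "continuous_on {0..} h"
    and dom: "\<And>t. 0 \<le> t \<Longrightarrow> \<bar>g t\<bar> \<le> h t"
  shows "\<bar>integral {0..} g - integral {0..real N} g\<bar> \<le> integral {0..} h - integral {0..real N} h"
proof -
  let ?f = "\<lambda>g t. if t \<in> {0..real N} then g t else 0"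
  have gi: "g integrable_on {0..}" by (rule dominated_integral_truncation(1)[OF g h(1) dom])
  note gN = integral_truncation[OF g, of N] and hN = integral_truncation[OF h(2), of N]
  have "integral {0..} g - integral {0..real N} g = integral {0..} (\<lambda>t. g t - ?f g t)"
    by (simp only: integral_diff[OF gi gN(2)] gN(1))
  also have "\<bar>\<dots>\<bar> \<le> integral {0..} (\<lambda>t. h t - ?f h t)"
    using integral_norm_bound_integral[OF integrable_diff[OF gi gN(2)] integrable_diff[OF h(1) hN(2)]]
      dom by fastforce
  also have "\<dots> = integral {0..} h - integral {0..real N} h"
    by (simp only: integral_diff[OF h(1) hN(2)] hN(1))
  finally show ?thesis .
qed

lemma uniform_integral_truncation:
  fixes g :: "'a \<Rightarrow> real \<Rightarrow> real" and h :: "real \<Rightarrow> real"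
  assumes g: "\<And>y. y \<in> S \<Longrightarrow> continuous_on {0..} (g y)"
    and h: "h integrable_on {0..}" "continuous_on {0..} h"
    and dom: "\<And>y t. y \<in> S \<Longrightarrow> 0 \<le> t \<Longrightarrow> \<bar>g y t\<bar> \<le> h t"
    and "0 < e"
  shows "\<forall>\<^sub>F N in sequentially. \<forall>y\<in>S. \<bar>integral {0..} (g y) - integral {0..real N} (g y)\<bar> < e"
proof (cases "S = {}")
  case False
  then obtain y0 where "y0 \<in> S" by blast
  then have "\<bar>h t\<bar> \<le> h t" if "0 \<le> t" for t
    using dom[of y0 t] that by linarith
  then have "(\<lambda>N. integral {0..real N} h) \<longlonglongrightarrow> integral {0..} h"
    by (rule dominated_integral_truncation(2)[OF h(2) h(1)])
  then have "\<forall>\<^sub>F N in sequentially. integral {0..} h - integral {0..real N} h < e"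
    using \<open>0 < e\<close> by (auto dest: tendstoD simp: dist_real_def eventually_mono)
  then show ?thesis
  proof eventually_elim
    case (elim N)
    show ?case
    proof
      fix y assume "y \<in> S"
      from integral_truncation_tail_bound[OF g[OF this] h dom[OF this], of N] elim
      show "\<bar>integral {0..} (g y) - integral {0..real N} (g y)\<bar> < e" by linarith
    qed
  qed
qed simp

lemma DERIV_parametric_integral:
  fixes f f' :: "real \<Rightarrow> real \<Rightarrow> real" and h :: "real \<Rightarrow> real"
  assumes S: "open S" "convex S" "z \<in> S"
    and deriv: "\<And>y t. y \<in> S \<Longrightarrow> 0 \<le> t \<Longrightarrow> ((\<lambda>y. f y t) has_real_derivative f' y t) (at y)"
    and f: "\<And>y. y \<in> S \<Longrightarrow> continuous_on {0..} (f y)"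
    and f': "continuous_on (S \<times> {0..}) (\<lambda>(y, t). f' y t)"
    and h: "h integrable_on {0..}" "continuous_on {0..} h"
    and dom: "\<And>y t. y \<in> S \<Longrightarrow> 0 \<le> t \<Longrightarrow> \<bar>f y t\<bar> \<le> h t"
    and dom': "\<And>y t. y \<in> S \<Longrightarrow> 0 \<le> t \<Longrightarrow> \<bar>f' y t\<bar> \<le> h t"
  shows "((\<lambda>y. integral {0..} (f y)) has_real_derivative integral {0..} (f' z)) (at z)"
proof -
  define F where "F N y = integral {0..real N} (f y)" for N y
  define F' where "F' N y = integral {0..real N} (f' y)" for N y
  have f'_cont: "continuous_on {0..} (f' y)" if "y \<in> S" for y
    by (rule continuous_on_compose2[OF f', where f="\<lambda>t. (y, t)", simplified])
       (use that in \<open>auto intro!: continuous_intros\<close>)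
  have F_deriv: "(F N has_derivative (*) (F' N y)) (at y within S)" if "y \<in> S" for N y
  proof -
    have "((\<lambda>y. integral (cbox 0 (real N)) (f y)) has_field_derivative
        integral (cbox 0 (real N)) (f' y)) (at y within S)"
    proof (rule leibniz_rule_field_derivative)
      show "((\<lambda>y. f y t) has_field_derivative f' y t) (at y within S)"
        if "y \<in> S" "t \<in> cbox 0 (real N)" for y t
        using deriv[of y t] that by (auto intro: has_field_derivative_at_within)
      show "f y integrable_on cbox 0 (real N)" if "y \<in> S" for y
        unfolding cbox_interval
        by (rule integrable_continuous_interval, rule continuous_on_subset[OF f[OF that]]) auto
      show "continuous_on (S \<times> cbox 0 (real N)) (\<lambda>(y, t). f' y t)"
        by (rule continuous_on_subset[OF f']) auto
    qed (use that S in auto)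
    then show ?thesis unfolding has_field_derivative_def F_def F'_def by simp
  qed
  have F'_uniform: "\<forall>\<^sub>F N in sequentially. \<forall>y\<in>S. \<forall>k.
      norm (F' N y * k - integral {0..} (f' y) * k) \<le> e * norm k" if "0 < e" for e
  proof -
    have "\<forall>\<^sub>F N in sequentially. \<forall>y\<in>S. \<bar>integral {0..} (f' y) - F' N y\<bar> < e"
      unfolding F'_def by (rule uniform_integral_truncation[OF f'_cont h dom' that])
    then show ?thesis
      by eventually_elim
        (auto simp: abs_mult left_diff_distrib[symmetric] abs_minus_commute intro!: mult_right_mono)
  qed
  have F_lim: "(\<lambda>N. F N y) \<longlonglongrightarrow> integral {0..} (f y)" if "y \<in> S" for y
    unfolding F_def by (rule dominated_integral_truncation(2)[OF f[OF that] h(1) dom[OF that]])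
  obtain G where G: "\<forall>y\<in>S. (\<lambda>N. F N y) \<longlonglongrightarrow> G y
      \<and> (G has_derivative (*) (integral {0..} (f' y))) (at y within S)"
    using has_derivative_sequence[OF S(2) F_deriv F'_uniform S(3) F_lim[OF S(3)]] by blast
  have "G y = integral {0..} (f y)" if "y \<in> S" for y
    using G F_lim[OF that] that by (blast intro: LIMSEQ_unique)
  moreover have "(G has_real_derivative integral {0..} (f' z)) (at z)"
  proof -
    from G S(3) have "(G has_derivative (*) (integral {0..} (f' z))) (at z within S)" by blast
    then show ?thesis unfolding has_field_derivative_def at_within_open[OF S(3) S(1)] .
  qed
  ultimately show ?thesis
    by (rule has_field_derivative_transform_within_open[OF _ S(1) S(3), rotated]) auto
qed

definition cosh_moment :: "nat \<Rightarrow> real \<Rightarrow> real" where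
  "cosh_moment n z = integral {0..} (\<lambda>t. exp (- z * cosh t) * cosh t ^ n)"

lemma besselK_eq_cosh_moment: "besselK 0 = cosh_moment 0" "besselK 1 = cosh_moment 1"
  by (simp_all add: fun_eq_iff besselK_def cosh_moment_def)

lemma power_div_fact_le_exp:
  fixes x :: real
  assumes "0 \<le> x"
  shows "x ^ n / fact n \<le> exp x"
proof -
  have "(\<lambda>k. x ^ k / fact k) sums exp x"
    using exp_converges[of x] by (simp add: divide_inverse mult.commute)
  then show ?thesis
    using sum_le_suminf[of "\<lambda>k. x ^ k / fact k" "{n}"] assms by (simp add: sums_iff)
qed

lemma exp_cosh_moment_bound:
  fixes a y t :: real
  assumes a: "0 < a" "a \<le> y" and "0 \<le> t"
  shows "\<bar>exp (- y * cosh t) * cosh t ^ n\<bar> \<le> 2 * fact (Suc n) / a ^ Suc n * exp (- t)"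
proof -
  define c where "c = cosh t"
  have c: "1 \<le> c" "exp t / 2 \<le> c"
    by (simp_all add: c_def cosh_real_ge_1) (simp add: cosh_field_def)
  have "(a * c) ^ Suc n / fact (Suc n) \<le> exp (a * c)"
    using a c by (intro power_div_fact_le_exp) simp
  also have "\<dots> \<le> exp (y * c)"
    using a c by simp
  finally have "a ^ Suc n * c ^ Suc n \<le> fact (Suc n) * exp (y * c)"
    by (simp add: divide_le_eq power_mult_distrib ac_simps del: fact_Suc)
  then have "exp (- y * c) * c ^ n \<le> fact (Suc n) / (a ^ Suc n * c)"
    using a c by (simp add: exp_minus divide_simps ac_simps del: fact_Suc)
  also have "\<dots> \<le> fact (Suc n) / (a ^ Suc n * (exp t / 2))"
    using a c by (intro divide_left_mono mult_left_mono mult_pos_pos) auto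
  also have "\<dots> = 2 * fact (Suc n) / a ^ Suc n * exp (- t)"
    by (simp add: exp_minus field_simps)
  finally show ?thesis using c by (simp add: c_def)
qed

lemma integrable_cmult_exp_minus: "(\<lambda>t. C * exp (- t)) integrable_on {0::real..}"
  using integrable_on_cmult_left[OF integrable_on_exp_minus_to_infinity[of 1 0], of C] by simp

lemma cosh_moment_integrable_tendsto:
  assumes "0 < z"
  shows "(\<lambda>t. exp (- z * cosh t) * cosh t ^ n) integrable_on {0..}"
    and "(\<lambda>N. integral {0..real N} (\<lambda>t. exp (- z * cosh t) * cosh t ^ n)) \<longlonglongrightarrow> cosh_moment n z"
proof -
  have "continuous_on {0..} (\<lambda>t. exp (- z * cosh t) * cosh t ^ n)"
    by (intro continuous_intros)
  note dominated = dominated_integral_truncation[OF this integrable_cmult_exp_minus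
      exp_cosh_moment_bound[OF assms order_refl]]
  show "(\<lambda>t. exp (- z * cosh t) * cosh t ^ n) integrable_on {0..}"
    by (rule dominated(1))
  show "(\<lambda>N. integral {0..real N} (\<lambda>t. exp (- z * cosh t) * cosh t ^ n)) \<longlonglongrightarrow> cosh_moment n z"
    unfolding cosh_moment_def by (rule dominated(2))
qed

lemma cosh_moment_pos:
  assumes "0 < z"
  shows "0 < cosh_moment n z"
proof -
  let ?f = "\<lambda>t. exp (- z * cosh t) * cosh t ^ n"
  have "?f integrable_on {0..1}"
    by (intro integrable_continuous_interval continuous_intros)
  have "0 < exp (- z * cosh 1)" by simp
  also have "exp (- z * cosh 1) = integral {0..1::real} (\<lambda>_. exp (- z * cosh 1))"
    by simp
  also have "\<dots> \<le> integral {0..1} ?f"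
  proof (rule integral_le[OF integrable_const_ivl \<open>?f integrable_on {0..1}\<close>])
    fix t :: real assume "t \<in> {0..1}"
    then have "exp (- z * cosh 1) \<le> exp (- z * cosh t)"
      using assms by (simp add: cosh_real_nonneg_le_iff)
    also have "\<dots> \<le> ?f t"
      by (simp add: cosh_real_ge_1 one_le_power)
    finally show "exp (- z * cosh 1) \<le> ?f t" .
  qed
  also have "\<dots> \<le> cosh_moment n z"
    unfolding cosh_moment_def
    using cosh_moment_integrable_tendsto(1)[OF assms] \<open>?f integrable_on {0..1}\<close>
    by (intro integral_subset_le) (auto simp: cosh_real_ge_1)
  finally show ?thesis .
qed

lemma DERIV_cosh_moment:
  assumes "0 < z"
  shows "(cosh_moment n has_real_derivative - cosh_moment (Suc n) z) (at z)"
proof -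
  define a where "a = z / 2"
  define C where "C = 2 * fact (Suc (Suc n)) / a ^ Suc (Suc n)"
  have dom: "\<bar>exp (- y * cosh t) * cosh t ^ k\<bar> \<le> C * exp (- t)"
    if "y \<in> {a<..}" "0 \<le> t" "k \<le> Suc n" for y t k
  proof -
    have "\<bar>exp (- y * cosh t) * cosh t ^ k\<bar> \<le> \<bar>exp (- y * cosh t) * cosh t ^ Suc n\<bar>"
      using that power_increasing[of k "Suc n" "cosh t"] by (simp add: abs_mult cosh_real_ge_1)
    also have "\<dots> \<le> C * exp (- t)"
      unfolding C_def using that assms a_def by (intro exp_cosh_moment_bound) auto
    finally show ?thesis .
  qed
  have "((\<lambda>y. integral {0..} (\<lambda>t. exp (- y * cosh t) * cosh t ^ n)) has_real_derivative
      integral {0..} (\<lambda>t. - (exp (- z * cosh t) * cosh t ^ Suc n))) (at z)"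
  proof (rule DERIV_parametric_integral[where S="{a<..}" and h="\<lambda>t. C * exp (- t)"])
    show "((\<lambda>y. exp (- y * cosh t) * cosh t ^ n) has_real_derivative
        - (exp (- y * cosh t) * cosh t ^ Suc n)) (at y)" for y t :: real
      by (auto intro!: derivative_eq_intros)
    show "continuous_on ({a<..} \<times> {0..}) (\<lambda>(y, t). - (exp (- y * cosh t) * cosh t ^ Suc n))"
      by (auto intro!: continuous_intros simp: case_prod_beta)
    show "\<bar>exp (- y * cosh t) * cosh t ^ n\<bar> \<le> C * exp (- t)"
      and "\<bar>- (exp (- y * cosh t) * cosh t ^ Suc n)\<bar> \<le> C * exp (- t)"
      if "y \<in> {a<..}" "0 \<le> t" for y t
      using dom[OF that, of n] dom[OF that, of "Suc n"] by simp_all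
    show "continuous_on {0..} (\<lambda>t. exp (- y * cosh t) * cosh t ^ n)" for y :: real
      by (intro continuous_intros)
    show "(\<lambda>t. C * exp (- t)) integrable_on {0..}" "continuous_on {0..} (\<lambda>t. C * exp (- t))"
      by (intro integrable_cmult_exp_minus continuous_intros)+
  qed (use assms a_def in auto)
  then show ?thesis
    by (simp add: cosh_moment_def[abs_def] integral_neg)
qed

lemma cosh_moment_recurrence:
  assumes "0 < z"
  shows "z * (cosh_moment 2 z - cosh_moment 0 z) = cosh_moment 1 z"
proof -
  define m where "m k N = integral {0..real N} (\<lambda>t. exp (- z * cosh t) * cosh t ^ k)" for k N
  define F where "F t = - (sinh t * exp (- z * cosh t))" for t
  (* Integration by parts: since cosh\<^sup>2 - sinh\<^sup>2 = 1, the integrand is F', and F vanishes at 0 and at infinity. *)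
  have trunc_eq: "z * (m 2 N - m 0 N) - m 1 N = F (real N)" for N
  proof -
    have m: "((\<lambda>t. exp (- z * cosh t) * cosh t ^ k) has_integral m k N) {0..real N}" for k
      unfolding m_def by (intro integrable_integral integrable_continuous_interval continuous_intros)
    have "((\<lambda>t. z * (exp (- z * cosh t) * cosh t ^ 2 - exp (- z * cosh t) * cosh t ^ 0)
        - exp (- z * cosh t) * cosh t ^ 1) has_integral z * (m 2 N - m 0 N) - m 1 N) {0..real N}"
      by (intro has_integral_diff has_integral_mult_right m)
    moreover have "((\<lambda>t. z * (exp (- z * cosh t) * cosh t ^ 2 - exp (- z * cosh t) * cosh t ^ 0)
        - exp (- z * cosh t) * cosh t ^ 1) has_integral F (real N) - F 0) {0..real N}"
    proof (rule fundamental_theorem_of_calculus)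
      fix t assume "t \<in> {0..real N}"
      have "(F has_real_derivative - (cosh t * exp (- z * cosh t)
          + sinh t * (exp (- z * cosh t) * (- z * sinh t)))) (at t within {0..real N})"
        unfolding F_def by (auto intro!: derivative_eq_intros)
      then show "(F has_vector_derivative z * (exp (- z * cosh t) * cosh t ^ 2
          - exp (- z * cosh t) * cosh t ^ 0) - exp (- z * cosh t) * cosh t ^ 1) (at t within {0..real N})"
        unfolding has_real_derivative_iff_has_vector_derivative[symmetric]
        using cosh_square_eq[of t] by (simp add: algebra_simps power2_eq_square)
    qed simp
    ultimately show ?thesis
      by (simp add: F_def has_integral_unique)
  qed
  moreover have "(\<lambda>N. z * (m 2 N - m 0 N) - m 1 N)
      \<longlonglongrightarrow> z * (cosh_moment 2 z - cosh_moment 0 z) - cosh_moment 1 z"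
    unfolding m_def by (intro tendsto_intros cosh_moment_integrable_tendsto(2) assms)
  moreover have "((\<lambda>t. - (sinh t * exp (- z * cosh t))) \<longlongrightarrow> 0) at_top"
    using assms by real_asymp
  then have "(\<lambda>N. F (real N)) \<longlonglongrightarrow> 0"
    unfolding F_def by (rule filterlim_compose[OF _ filterlim_real_sequentially])
  ultimately show ?thesis
    unfolding trunc_eq using LIMSEQ_unique by (metis eq_iff_diff_eq_0)
qed

lemma DERIV_besselK0: "0 < z \<Longrightarrow> (besselK 0 has_real_derivative - besselK 1 z) (at z)"
  unfolding besselK_eq_cosh_moment unfolding One_nat_def by (rule DERIV_cosh_moment)

lemma DERIV_x_besselK1:
  assumes "0 < z"
  shows "((\<lambda>y. y * besselK 1 y) has_real_derivative - (z * besselK 0 z)) (at z)"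
proof -
  from DERIV_mult[OF DERIV_ident DERIV_cosh_moment[OF assms, of 1]] show ?thesis
    unfolding besselK_eq_cosh_moment
    using cosh_moment_recurrence[OF assms] by (simp add: numeral_2_eq_2 algebra_simps)
qed

lemma besselK_pos: "0 < z \<Longrightarrow> 0 < besselK 0 z" "0 < z \<Longrightarrow> 0 < besselK 1 z"
  unfolding besselK_eq_cosh_moment by (simp_all add: cosh_moment_pos)

lemma continuous_zero_on_Ioo_imp_Icc:
  fixes g :: "real \<Rightarrow> real"
  assumes "continuous_on {a..b} g" "a < b" "\<And>x. a < x \<Longrightarrow> x < b \<Longrightarrow> g x = 0"
    and "x \<in> {a..b}"
  shows "g x = 0"
proof -
  have "closed {x \<in> {a..b}. g x = 0}"
    by (rule continuous_closed_preimage_constant[OF assms(1)]) simp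
  moreover have "{a<..<b} \<subseteq> {x \<in> {a..b}. g x = 0}"
    using assms(3) by auto
  ultimately have "closure {a<..<b} \<subseteq> {x \<in> {a..b}. g x = 0}"
    by (rule closure_minimal[rotated])
  then show ?thesis
    using assms(2,4) by auto
qed

lemma coupled_bvp_zero:
  fixes E H c :: "real \<Rightarrow> real"
  assumes c: "\<And>x. x \<in> {a..b} \<Longrightarrow> 0 < c x"
    and E': "\<And>x. x \<in> {a..b} \<Longrightarrow> (E has_real_derivative c x * H x) (at x within {a..b})"
    and H': "\<And>x. x \<in> {a..b} \<Longrightarrow> (H has_real_derivative E x) (at x within {a..b})"
    and "E a = 0" "H b = 0" and x: "x \<in> {a..b}"
  shows "E x = 0 \<and> H x = 0"
proof (cases "a = b")
  case True
  with x \<open>E a = 0\<close> \<open>H b = 0\<close> show ?thesis by simp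
next
  case False
  with x have "a < b" by simp
  define f where "f y = E y * H y" for y
  define f' where "f' y = c y * (H y)\<^sup>2 + (E y)\<^sup>2" for y
  have f': "(f has_real_derivative f' y) (at y within {a..b})" if "y \<in> {a..b}" for y
    unfolding f_def[abs_def] f'_def using DERIV_mult[OF E'[OF that] H'[OF that]]
    by (simp add: power2_eq_square mult_ac)
  have f'_nonneg: "0 \<le> f' y" if "y \<in> {a..b}" for y
    using c[OF that] by (simp add: f'_def)
  have f_cont: "continuous_on {a..b} f"
    using f' by (meson DERIV_continuous continuous_on_eq_continuous_within)
  have f'_at: "(f has_real_derivative f' y) (at y)" if "a < y" "y < b" for y
    using f'[of y] that by (simp add: at_within_Icc_at)
  have f_mono: "f y \<le> f y'" if "a \<le> y" "y \<le> y'" "y' \<le> b" for y y'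
  proof (rule DERIV_nonneg_imp_increasing_open[of y y' f])
    show "\<exists>D. (f has_real_derivative D) (at t) \<and> 0 \<le> D" if "y < t" "t < y'" for t
      using f'_at[of t] f'_nonneg[of t] that \<open>a \<le> y\<close> \<open>y' \<le> b\<close> by auto
    show "continuous_on {y..y'} f"
      using continuous_on_subset[OF f_cont] that by simp
  qed (rule \<open>y \<le> y'\<close>)
  have f_zero: "f y = 0" if "a \<le> y" "y \<le> b" for y
    using f_mono[of a y] f_mono[of y b] that \<open>E a = 0\<close> \<open>H b = 0\<close> by (simp add: f_def)
  have interior: "E y = 0 \<and> H y = 0" if "a < y" "y < b" for y
  proof -
    have "f' y = 0"
    proof (rule DERIV_local_const[OF f'_at[OF that]])
      show "0 < min (y - a) (b - y)" using that by simp
      show "\<forall>t. \<bar>y - t\<bar> < min (y - a) (b - y) \<longrightarrow> f y = f t"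
        using that by (auto simp: f_zero abs_less_iff)
    qed
    then show ?thesis
      using c[of y] that by (simp add: f'_def add_nonneg_eq_0_iff)
  qed
  have "continuous_on {a..b} E" "continuous_on {a..b} H"
    using E' H' by (meson DERIV_continuous continuous_on_eq_continuous_within)+
  then show ?thesis
    using continuous_zero_on_Ioo_imp_Icc[OF _ \<open>a < b\<close> _ x] interior by blast
qed

lemma modified_bessel_system:
  fixes \<delta> \<nu> C1 C2 :: real and z :: "real \<Rightarrow> real"
  assumes z_def: "z = (\<lambda>x. 2 * sqrt (\<delta> * (\<nu> - x)))"
  defines "P \<equiv> \<lambda>x. C1 * besselI 0 (z x) + C2 * besselK 0 (z x)"
    and "J \<equiv> \<lambda>x. - sqrt ((\<nu> - x) / \<delta>) * (C1 * besselI 1 (z x) - C2 * besselK 1 (z x))"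
  assumes "0 < \<delta>" "x < \<nu>"
  shows "(P has_real_derivative \<delta> * J x / (\<nu> - x)) (at x)"
    and "(J has_real_derivative P x) (at x)"
proof -
  define W where "W y = C1 * besselI 1 y - C2 * besselK 1 y" for y
  define r where "r = sqrt (\<delta> * (\<nu> - x))"
  have r: "0 < r" "r\<^sup>2 = \<delta> * (\<nu> - x)" "z x = 2 * r"
    using assms by (simp_all add: r_def z_def)
  have J_eq: "J = (\<lambda>x. - (1 / (2 * \<delta>)) * (z x * W (z x)))"
  proof
    fix y
    have "sqrt (\<delta> * (\<nu> - y)) / \<delta> = sqrt (\<delta> * (\<nu> - y)) / sqrt (\<delta>\<^sup>2)"
      using \<open>0 < \<delta>\<close> by simp
    also have "\<dots> = sqrt ((\<nu> - y) / \<delta>)"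
      unfolding real_sqrt_divide[symmetric] using \<open>0 < \<delta>\<close> by (simp add: power2_eq_square)
    finally have "sqrt ((\<nu> - y) / \<delta>) = sqrt (\<delta> * (\<nu> - y)) / \<delta>" ..
    then show "J y = - (1 / (2 * \<delta>)) * (z y * W (z y))"
      by (simp add: J_def W_def z_def)
  qed
  have z': "(z has_real_derivative - \<delta> / r) (at x)"
    unfolding z_def r_def using assms
    by (auto intro!: derivative_eq_intros simp: field_simps)
  have "0 < z x" using r by simp
  have "(P has_real_derivative W (z x) * (- \<delta> / r)) (at x)"
    using DERIV_add[OF DERIV_cmult[OF DERIV_chain2[OF DERIV_besselI0 z'], of C1]
        DERIV_cmult[OF DERIV_chain2[OF DERIV_besselK0[OF \<open>0 < z x\<close>] z'], of C2]]
    by (simp add: P_def W_def algebra_simps)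
  moreover have "W (z x) * (- \<delta> / r) = \<delta> * J x / (\<nu> - x)"
  proof -
    have "\<nu> - x = r\<^sup>2 / \<delta>" and "J x = - (r / \<delta>) * W (z x)"
      using r \<open>0 < \<delta>\<close> by (simp_all add: J_eq)
    then show ?thesis
      using r(1) \<open>0 < \<delta>\<close> by (simp only:) (simp add: field_simps power2_eq_square)
  qed
  ultimately show "(P has_real_derivative \<delta> * J x / (\<nu> - x)) (at x)"
    by simp
  have "((\<lambda>y. y * W y) has_real_derivative z x * P x) (at (z x))"
    using DERIV_diff[OF DERIV_cmult[OF DERIV_x_besselI1, of C1]
        DERIV_cmult[OF DERIV_x_besselK1[OF \<open>0 < z x\<close>], of C2]]
    by (simp add: P_def W_def algebra_simps)
  from DERIV_cmult[OF DERIV_chain2[OF this z'], of "- (1 / (2 * \<delta>))"]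
  show "(J has_real_derivative P x) (at x)"
    using r \<open>0 < \<delta>\<close> by (simp add: J_eq field_simps)
qed

lemma modified_bessel_bvp:
  fixes q g z :: "real \<Rightarrow> real" and \<delta> \<nu> D C1 C2 :: real
  assumes z_def: "z = (\<lambda>x. 2 * sqrt (\<delta> * (\<nu> - x)))"
    and D_def: "D = besselI 0 (z 0) * besselK 1 (z 1) + besselK 0 (z 0) * besselI 1 (z 1)"
    and C1_def: "C1 = q 0 * besselK 1 (z 1) / D" and C2_def: "C2 = q 0 * besselI 1 (z 1) / D"
    and "0 < \<delta>" "1 < \<nu>"
    and q': "\<And>x. x \<in> {0..1} \<Longrightarrow> (q has_real_derivative \<delta> * g x / (\<nu> - x)) (at x within {0..1})"
    and g': "\<And>x. x \<in> {0..1} \<Longrightarrow> (g has_real_derivative q x) (at x within {0..1})"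
    and "g 1 = 0" and x: "x \<in> {0..1}"
  shows "q x = C1 * besselI 0 (z x) + C2 * besselK 0 (z x)
    \<and> g x = - sqrt ((\<nu> - x) / \<delta>) * (C1 * besselI 1 (z x) - C2 * besselK 1 (z x))"
proof -
  define P where "P x = C1 * besselI 0 (z x) + C2 * besselK 0 (z x)" for x
  define J where "J x = - sqrt ((\<nu> - x) / \<delta>) * (C1 * besselI 1 (z x) - C2 * besselK 1 (z x))" for x
  note system = modified_bessel_system[OF z_def \<open>0 < \<delta>\<close>, of _ C1 C2, folded P_def J_def]
  have "0 < z 0" "0 < z 1"
    using \<open>0 < \<delta>\<close> \<open>1 < \<nu>\<close> by (simp_all add: z_def)
  then have "0 < D"
    unfolding D_def by (intro add_pos_pos mult_pos_pos besselI_pos besselK_pos)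
  define k where "k = q 0 / D"
  have "C1 = k * besselK 1 (z 1)" "C2 = k * besselI 1 (z 1)"
    by (simp_all add: C1_def C2_def k_def)
  then have "P 0 = k * D"
    by (simp add: P_def D_def algebra_simps)
  also have "k * D = q 0"
    using \<open>0 < D\<close> by (simp add: k_def)
  finally have "P 0 = q 0" .
  moreover have "J 1 = 0"
    by (simp add: J_def C1_def C2_def)
  ultimately have "q x - P x = 0 \<and> g x - J x = 0"
  proof (intro coupled_bvp_zero[where c="\<lambda>y. \<delta> / (\<nu> - y)" and E="\<lambda>y. q y - P y"
      and H="\<lambda>y. g y - J y" and a=0 and b=1])
    fix y :: real assume y: "y \<in> {0..1}"
    then have "y < \<nu>" using \<open>1 < \<nu>\<close> by simp
    show "0 < \<delta> / (\<nu> - y)" using \<open>0 < \<delta>\<close> \<open>y < \<nu>\<close> by simp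
    show "((\<lambda>y. q y - P y) has_real_derivative \<delta> / (\<nu> - y) * (g y - J y)) (at y within {0..1})"
      using DERIV_diff[OF q'[OF y] has_field_derivative_at_within[OF system(1)[OF \<open>y < \<nu>\<close>]]]
      by (rule DERIV_cong) (simp add: diff_divide_distrib right_diff_distrib)
    show "((\<lambda>y. g y - J y) has_real_derivative q y - P y) (at y within {0..1})"
      by (rule DERIV_diff[OF g'[OF y] has_field_derivative_at_within[OF system(2)[OF \<open>y < \<nu>\<close>]]])
  qed (use x \<open>g 1 = 0\<close> in simp_all)
  then show ?thesis by (simp add: P_def J_def)
qed

lemma effective_pressure_bvp:
  fixes \<phi> \<phi>' \<phi>'' z :: "real \<Rightarrow> real" and a \<delta> \<nu> \<kappa> ql D C1 C2 :: real
  assumes z_def: "z = (\<lambda>x. 2 * sqrt (\<delta> * (\<nu> - x)))"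
    and D_def: "D = besselI 0 (z 0) * besselK 1 (z 1) + besselK 0 (z 0) * besselI 1 (z 1)"
    and C1_def: "C1 = (\<delta> * a * (\<phi> 0 + \<kappa>) - ql) * besselK 1 (z 1) / D"
    and C2_def: "C2 = (\<delta> * a * (\<phi> 0 + \<kappa>) - ql) * besselI 1 (z 1) / D"
    and "0 < \<delta>" "1 < \<nu>"
    and \<phi>: "\<And>x. x \<in> {0..1} \<Longrightarrow> (\<phi> has_real_derivative \<phi>' x) (at x within {0..1})"
    and \<phi>': "\<And>x. x \<in> {0..1} \<Longrightarrow> (\<phi>' has_real_derivative \<phi>'' x) (at x within {0..1})"
    and ode: "\<And>x. x \<in> {0..1} \<Longrightarrow> a * (\<nu> - x) * \<phi>'' x - a * \<phi>' x = \<delta> * a * (\<phi> x + \<kappa>) - ql"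
    and "\<phi>' 1 = 0" and x: "x \<in> {0..1}"
  shows "\<delta> * a * (\<phi> x + \<kappa>) - ql = C1 * besselI 0 (z x) + C2 * besselK 0 (z x)
    \<and> a * (\<nu> - x) * \<phi>' x = - sqrt ((\<nu> - x) / \<delta>) * (C1 * besselI 1 (z x) - C2 * besselK 1 (z x))"
proof -
  define q where "q y = \<delta> * a * (\<phi> y + \<kappa>) - ql" for y
  define g where "g y = a * (\<nu> - y) * \<phi>' y" for y
  have "q x = C1 * besselI 0 (z x) + C2 * besselK 0 (z x)
    \<and> g x = - sqrt ((\<nu> - x) / \<delta>) * (C1 * besselI 1 (z x) - C2 * besselK 1 (z x))"
  proof (rule modified_bessel_bvp[OF z_def D_def _ _ \<open>0 < \<delta>\<close> \<open>1 < \<nu>\<close> _ _ _ x])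
    fix y :: real assume y: "y \<in> {0..1}"
    have "(q has_real_derivative \<delta> * a * \<phi>' y) (at y within {0..1})"
      unfolding q_def[abs_def] using \<phi>[OF y] by (auto intro!: derivative_eq_intros)
    moreover have "\<delta> * a * \<phi>' y = \<delta> * g y / (\<nu> - y)"
      using y \<open>1 < \<nu>\<close> by (simp add: g_def)
    ultimately show "(q has_real_derivative \<delta> * g y / (\<nu> - y)) (at y within {0..1})"
      by simp
    have "(g has_real_derivative - a * \<phi>' y + a * (\<nu> - y) * \<phi>'' y) (at y within {0..1})"
      unfolding g_def[abs_def] using \<phi>'[OF y] by (auto intro!: derivative_eq_intros)
    then show "(g has_real_derivative q y) (at y within {0..1})"
      using ode[OF y] by (simp add: q_def)
  qed (simp_all add: C1_def C2_def q_def g_def \<open>\<phi>' 1 = 0\<close>)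
  then show ?thesis by (simp add: q_def g_def)
qed

theorem mainTheorem3:
  fixes L K Lpa t0 numin numax sigma1 sigma2 p0 w0 wD ql :: real
    and p p' p'' u u' u'' w w' w'' :: "real \<Rightarrow> real"
  assumes "L > 0" "K > 0" "Lpa > 0" "t0 > 0" "0 < numin" "numin < numax"
    and dp: "\<forall>x\<in>{0..1}. (p has_real_derivative p' x) (at x within {0..1})"
    and dp': "\<forall>x\<in>{0..1}. (p' has_real_derivative p'' x) (at x within {0..1})"
    and cp'': "continuous_on {0..1} p''"
    and du: "\<forall>x\<in>{0..1}. (u has_real_derivative u' x) (at x within {0..1})"
    and du': "\<forall>x\<in>{0..1}. (u' has_real_derivative u'' x) (at x within {0..1})"
    and cu'': "continuous_on {0..1} u''"
    and dw: "\<forall>x\<in>{0..1}. (w has_real_derivative w' x) (at x within {0..1})"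
    and dw': "\<forall>x\<in>{0..1}. (w' has_real_derivative w'' x) (at x within {0..1})"
    and cw'': "continuous_on {0..1} w''"
    and ode: "\<forall>x\<in>{0..1}.
        let beta = Lpa * L^2 / K;
            nu = (\<lambda>y. numax - (numax - numin) * y);
            dnu = - (numax - numin);
            qU = beta * ((1 / t0) * (p0 - p x) + sigma1 * u x + sigma2 * (w x - w0))
        in (1 / t0) * (dnu * p' x + nu x * p'' x)
           - sigma1 * (dnu * u' x + nu x * u'' x)
           - sigma2 * (dnu * w' x + nu x * w'' x) + qU - ql = 0"
    and bc: "p 0 = 1" "u 0 = 1" "w 0 = wD" "p' 1 = 0" "u' 1 = 0" "w' 1 = 0"
  shows "\<forall>x\<in>{0..1}.
    let beta = Lpa * L^2 / K;
        nu = (\<lambda>y. numax - (numax - numin) * y);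
        qU = (\<lambda>y. beta * ((1 / t0) * (p0 - p y) + sigma1 * u y + sigma2 * (w y - w0)));
        jU = (\<lambda>y. L * nu y * (- (1 / t0) * p' y + sigma1 * u' y + sigma2 * w' y));
        nus = numax / (numax - numin);
        deltas = Lpa * L^2 / (K * (numax - numin));
        z = (\<lambda>y. 2 * sqrt (deltas * (nus - y)));
        z0 = z 0; z1 = z 1;
        q0 = beta * ((1 / t0) * (p0 - 1) + sigma1 + sigma2 * (wD - w0));
        D = besselI 0 z0 * besselK 1 z1 + besselK 0 z0 * besselI 1 z1;
        C1 = (q0 - ql) * besselK 1 z1 / D;
        C2 = (q0 - ql) * besselI 1 z1 / D
    in qU x = C1 * besselI 0 (z x) + C2 * besselK 0 (z x) + ql
     \<and> jU x = - L * sqrt ((nus - x) / deltas) * (C1 * besselI 1 (z x) - C2 * besselK 1 (z x))"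
proof -
  define a where "a = numax - numin"
  define beta where "beta = Lpa * L^2 / K"
  define nus where "nus = numax / (numax - numin)"
  define deltas where "deltas = Lpa * L^2 / (K * (numax - numin))"
  define z where "z y = 2 * sqrt (deltas * (nus - y))" for y
  define q0 where "q0 = beta * ((1 / t0) * (p0 - 1) + sigma1 + sigma2 * (wD - w0))"
  define D where "D = besselI 0 (z 0) * besselK 1 (z 1) + besselK 0 (z 0) * besselI 1 (z 1)"
  define C1 where "C1 = (q0 - ql) * besselK 1 (z 1) / D"
  define C2 where "C2 = (q0 - ql) * besselI 1 (z 1) / D"
  define nu where "nu y = numax - (numax - numin) * y" for y
  define \<phi> where "\<phi> y = - (1 / t0) * p y + sigma1 * u y + sigma2 * w y" for y
  define \<phi>' where "\<phi>' y = - (1 / t0) * p' y + sigma1 * u' y + sigma2 * w' y" for y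
  define \<phi>'' where "\<phi>'' y = - (1 / t0) * p'' y + sigma1 * u'' y + sigma2 * w'' y" for y
  define \<kappa> where "\<kappa> = p0 / t0 - sigma2 * w0"
  have "0 < deltas" "1 < nus"
    using assms(1-6) by (simp_all add: deltas_def nus_def)
  have beta_eq: "beta = deltas * a"
    using assms(6) by (simp add: beta_def deltas_def a_def)
  have nu_eq: "nu y = a * (nus - y)" for y
    using assms(6) by (simp add: nus_def nu_def a_def field_simps)
  have qU_eq: "beta * ((1 / t0) * (p0 - p y) + sigma1 * u y + sigma2 * (w y - w0))
      = deltas * a * (\<phi> y + \<kappa>)" for y
    by (simp add: beta_eq \<phi>_def \<kappa>_def algebra_simps diff_divide_distrib)
  have q0_eq: "q0 = deltas * a * (\<phi> 0 + \<kappa>)"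
    using qU_eq[of 0] by (simp add: q0_def bc)
  have sol: "deltas * a * (\<phi> x + \<kappa>) - ql = C1 * besselI 0 (z x) + C2 * besselK 0 (z x)
      \<and> a * (nus - x) * \<phi>' x
        = - sqrt ((nus - x) / deltas) * (C1 * besselI 1 (z x) - C2 * besselK 1 (z x))"
    if "x \<in> {0..1}" for x
  proof (rule effective_pressure_bvp[OF _ D_def _ _ \<open>0 < deltas\<close> \<open>1 < nus\<close> _ _ _ _ that])
    fix y :: real assume y: "y \<in> {0..1}"
    show "(\<phi> has_real_derivative \<phi>' y) (at y within {0..1})"
      unfolding \<phi>_def[abs_def] \<phi>'_def using dp du dw y assms(4) by (auto intro!: derivative_eq_intros)
    show "(\<phi>' has_real_derivative \<phi>'' y) (at y within {0..1})"
      unfolding \<phi>'_def[abs_def] \<phi>''_def using dp' du' dw' y assms(4) by (auto intro!: derivative_eq_intros)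
    have "a * (nus - y) * \<phi>'' y - a * \<phi>' y = - ((1 / t0) * (- a * p' y + nu y * p'' y)
        - sigma1 * (- a * u' y + nu y * u'' y) - sigma2 * (- a * w' y + nu y * w'' y))"
      by (simp add: nu_eq \<phi>'_def \<phi>''_def algebra_simps diff_divide_distrib)
    then show "a * (nus - y) * \<phi>'' y - a * \<phi>' y = deltas * a * (\<phi> y + \<kappa>) - ql"
      using ode[rule_format, OF y] qU_eq[of y]
      unfolding Let_def beta_def[symmetric] nu_def[symmetric] unfolding a_def[symmetric]
      by linarith
  qed (simp_all add: fun_eq_iff z_def C1_def C2_def q0_eq \<phi>'_def bc)
  then show ?thesis
    unfolding Let_def
    unfolding beta_def[symmetric] nus_def[symmetric] deltas_def[symmetric] z_def[symmetric]
      q0_def[symmetric] D_def[symmetric] C1_def[symmetric] C2_def[symmetric] nu_def[symmetric]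
      \<phi>'_def[symmetric] nu_eq qU_eq
    by (simp add: mult.assoc diff_eq_eq)
qed

end
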